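(* Let $n\ge1$, $b>0$, let $\varepsilon_1,\dots,\varepsilon_n$ be i.i.d. with $\mathbf{P}(\varepsilon_i=\pm1)=\frac12$ and $R_n:=\sum_{i=1}^n\varepsilon_i$. For $y\in\mathbb{R}$ put $x:=\frac{y\sqrt n}{2b}+\frac n2$. Let $u_*$ be the unique solution in $(0,1)$ of $\ln\frac{1-u}{-\ln u}-1-\frac12\frac{(1+u)\ln u}{1-u}=0$ (numerically $u_*=0.00505778\ldots$), $u_{**}:=\frac{u_*}{1-u_*}$, and $j_{**}:=\big\lfloor\frac{n-u_{**}}{1+u_{**}}\big\rfloor$. Then $$c_3\,\mathbf{P}^{\mathrm{Lin,LC}}\Big(R_n\ge1+\frac{y\sqrt n}{b}\Big)\le c_3\,\mathbf{P}^{\mathrm{LC}}\Big(R_n\ge\frac{y\sqrt n}{b}\Big)$$ for all $y$ with $x\le j_{**}$, where $c_3:=2e^3/9$. Moreover, if $n\le196$, this inequality holds for all $y$ with $x\le n$.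
   Context: $z\mapsto\mathbf{P}^{\mathrm{LC}}(R_n\ge z)$ is the least log-concave majorant on $\mathbb{R}$ of $z\mapsto\mathbf{P}(R_n\ge z)$. $\mathbf{P}^{\mathrm{Lin}}(R_n\ge z)$ is the linear interpolation of $z\mapsto\mathbf{P}(R_n\ge z)$ over the lattice $\{n+2k:k\in\mathbb{Z}\}$: $\mathbf{P}^{\mathrm{Lin}}(R_n\ge z)=(1-\gamma)\mathbf{P}(R_n\ge n+2k)+\gamma\mathbf{P}(R_n\ge n+2k+2)$ whenever $\gamma:=(z-n-2k)/2\in[0,1]$; $\mathbf{P}^{\mathrm{Lin,LC}}(R_n\ge\cdot)$ is the least log-concave majorant of $\mathbf{P}^{\mathrm{Lin}}(R_n\ge\cdot)$ on $\mathbb{R}$. Least log-concave majorant of $\phi\ge0$: the smallest $g\ge\phi$ with $g\ge0$ and $\ln g$ concave (values $-\infty$ allowed). *)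

theory Defs
  imports "HOL-Probability.Probability"
begin

definition rademacher_sum :: "nat \<Rightarrow> int pmf" where
  "rademacher_sum n =
     map_pmf (\<lambda>eps. \<Sum>i<n. eps i) (Pi_pmf {..<n} 0 (\<lambda>_. pmf_of_set {-1, 1::int}))"

definition tailR :: "nat \<Rightarrow> real \<Rightarrow> real" where
  "tailR n z = measure_pmf.prob (rademacher_sum n) {r. z \<le> real_of_int r}"

definition log_concave :: "(real \<Rightarrow> real) \<Rightarrow> bool" where
  "log_concave g \<longleftrightarrow> (\<forall>x. 0 \<le> g x) \<and>
     (\<forall>x y t. 0 < t \<and> t < 1 \<longrightarrow> g x powr (1 - t) * g y powr t \<le> g ((1 - t) * x + t * y))"

definition lc_majorant :: "(real \<Rightarrow> real) \<Rightarrow> real \<Rightarrow> real" where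
  "lc_majorant \<phi> z = Inf ((\<lambda>g. g z) ` {g. log_concave g \<and> (\<forall>x. \<phi> x \<le> g x)})"

text \<open>Linear interpolation of P(R_n \<ge> .) over the lattice n + 2Z.\<close>
definition tailR_lin :: "nat \<Rightarrow> real \<Rightarrow> real" where
  "tailR_lin n z =
     (let k = \<lfloor>(z - real n) / 2\<rfloor>; \<gamma> = (z - real n - 2 * real_of_int k) / 2
      in (1 - \<gamma>) * tailR n (real n + 2 * real_of_int k)
         + \<gamma> * tailR n (real n + 2 * real_of_int k + 2))"

definition u_star :: real where
  "u_star = (THE u. 0 < u \<and> u < 1 \<and>
      ln ((1 - u) / (- ln u)) - 1 - (1/2) * ((1 + u) * ln u / (1 - u)) = 0)"

definition u_star2 :: real where
  "u_star2 = u_star / (1 - u_star)"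

definition j_star2 :: "nat \<Rightarrow> int" where
  "j_star2 n = \<lfloor>(real n - u_star2) / (1 + u_star2)\<rfloor>"

definition c3 :: real where
  "c3 = 2 * exp 3 / 9"

end

(* Let Q m = P(R_n >= 2m - n) be the tail on the lattice 2Z - n.  Tail sums of binomial
   coefficients are log-concave, so Q lies below each log-chord L_j, the log-linear function
   through the lattice values at 2j - n and 2j - n + 2.  The minimum g of 1 and of the shifted
   chords v |-> L_j (v - 1), j < J, is log-concave.  It majorises the linear interpolation of the
   tail: between two lattice points this amounts to (1 - gamma) + gamma r <= r powr (gamma - 1/2)
   for the ratio r = Q (j+1) / Q j, which holds for all r in [u, 1] as soon as
   u powr s - (1/2 - s) - (1/2 + s) u >= 0 for all s, i.e. psi u <= 0; and
   Q (j+1) / Q j >= (n - j) / (n + 1) >= u for j < J.  Conversely g (1 + z) <= L_j z, a geometric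
   mean of two neighbouring tail values, which lies below every log-concave majorant of the tail
   whenever z <= 2J - n.  The two claims are the cases u = u_*, J = j_** and u = 1/197, J = n. *)

theory Submission
  imports Defs
begin

section \<open>Elementary inequalities\<close>

lemma powr_less_tangent:
  fixes s t :: real
  assumes s: "0 < s" "s < 1" and t: "0 < t" "t \<noteq> 1"
  shows "t powr s < 1 - s + s * t"
proof -
  define a where "a = ln t"
  have a: "a \<noteq> 0" "t = exp a" using t by (auto simp: a_def)
  have "1 - s * a < exp (- (s * a))" "1 + (1 - s) * a < exp ((1 - s) * a)"
    using exp_minus_greater[of "s * a"] exp_minus_greater[of "- ((1 - s) * a)"] a(1) s by auto
  hence "exp (s * a) * (1 - s * a) < exp (s * a) * exp (- (s * a))"
    "exp (s * a) * (1 + (1 - s) * a) < exp (s * a) * exp ((1 - s) * a)"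
    by simp_all
  moreover have "exp (s * a) * exp (- (s * a)) = 1" "exp (s * a) * exp ((1 - s) * a) = exp a"
    by (simp_all add: algebra_simps flip: exp_add)
  ultimately have "(1 - s) * (exp (s * a) * (1 - s * a)) + s * (exp (s * a) * (1 + (1 - s) * a))
      < (1 - s) * 1 + s * exp a"
    using s by (intro add_strict_mono mult_strict_left_mono) auto
  thus ?thesis using a by (simp add: powr_def algebra_simps)
qed

lemma powr_strict_concave:
  fixes a b l s :: real
  assumes l: "0 < l" "l < 1" and ab: "0 < a" "0 < b" "a \<noteq> b" and s: "0 < s" "s < 1"
  shows "l * a powr s + (1 - l) * b powr s < (l * a + (1 - l) * b) powr s"
proof -
  define r where "r = l * a + (1 - l) * b"
  have "a - r = (1 - l) * (a - b)" "b - r = l * (b - a)" by (simp_all add: r_def algebra_simps)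
  hence r: "0 < r" "a \<noteq> r" "b \<noteq> r" using l ab by (auto simp: r_def add_pos_pos)
  have "l * (a / r) powr s + (1 - l) * (b / r) powr s
      < l * (1 - s + s * (a / r)) + (1 - l) * (1 - s + s * (b / r))"
    using l ab r s by (intro add_strict_mono mult_strict_left_mono powr_less_tangent) auto
  also have "\<dots> = 1 - s + s * ((l * a + (1 - l) * b) / r)" using r by (simp add: field_simps)
  also have "\<dots> = 1" using r by (simp flip: r_def)
  finally have "r powr s * (l * (a / r) powr s + (1 - l) * (b / r) powr s) < r powr s * 1"
    using r by (intro mult_strict_left_mono) auto
  moreover have "r powr s * (l * (a / r) powr s + (1 - l) * (b / r) powr s)
      = l * a powr s + (1 - l) * b powr s"
    using r ab by (simp add: powr_divide field_simps)
  ultimately show ?thesis by (simp add: r_def)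
qed

definition pow_lin_gap :: "real \<Rightarrow> real \<Rightarrow> real" where
  "pow_lin_gap r s = r powr s - (1/2 - s) - (1/2 + s) * r"

lemma pow_lin_gap_pos:
  assumes u: "0 < u" "u < r" "r < 1" and s: "0 < s" "s < 1" and gap: "0 \<le> pow_lin_gap u s"
  shows "0 < pow_lin_gap r s"
proof -
  define l where "l = (1 - r) / (1 - u)"
  have l: "0 < l" "l < 1" and "l * (1 - u) = 1 - r" using u by (auto simp: l_def field_simps)
  hence r: "l * u + (1 - l) * 1 = r" by (simp add: algebra_simps)
  have "l * u powr s + (1 - l) < r powr s"
    using powr_strict_concave[OF l u(1) _ _ s, of 1] u r by simp
  moreover have "pow_lin_gap r s - l * pow_lin_gap u s = r powr s - l * u powr s - (1 - l)"
    unfolding pow_lin_gap_def by (simp flip: r add: algebra_simps)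
  moreover have "0 \<le> l * pow_lin_gap u s" using l gap by simp
  ultimately show ?thesis by linarith
qed

lemma pow_lin_gap_nonneg_mono:
  assumes u: "0 < u" "u \<le> r" "r \<le> 1" and s: "0 \<le> s" "s \<le> 1"
    and gap: "0 \<le> pow_lin_gap u s"
  shows "0 \<le> pow_lin_gap r s"
proof -
  consider "r = u" | "r = 1" | "s = 0" | "s = 1" | "u < r" "r < 1" "0 < s" "s < 1"
    using u s by linarith
  thus ?thesis
  proof cases
    case 5 thus ?thesis using pow_lin_gap_pos[of u r s] u gap by simp
  qed (use u gap in \<open>auto simp: pow_lin_gap_def\<close>)
qed

lemma lin_interp_le_powr:
  assumes u: "0 < u" "u \<le> r" "r \<le> 1" and gap: "\<forall>s\<in>{0..1/2}. 0 \<le> pow_lin_gap u s"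
    and \<gamma>: "0 \<le> \<gamma>" "\<gamma> \<le> 1"
  shows "(1 - \<gamma>) + \<gamma> * r \<le> r powr (\<gamma> - 1/2)"
proof (cases "\<gamma> \<le> 1/2")
  case True
  have "0 \<le> (\<gamma> - 1/2) * ln r" using True u by (intro mult_nonpos_nonpos) auto
  hence "1 \<le> r powr (\<gamma> - 1/2)" using u by (simp add: powr_def)
  moreover have "(1 - \<gamma>) + \<gamma> * r \<le> 1" using \<gamma> u mult_left_le[of r \<gamma>] by simp
  ultimately show ?thesis by linarith
next
  case False
  hence "0 \<le> pow_lin_gap r (\<gamma> - 1/2)"
    using \<gamma> gap by (intro pow_lin_gap_nonneg_mono[OF u]) auto
  thus ?thesis by (simp add: pow_lin_gap_def algebra_simps)
qed

section \<open>The constant u_*\<close>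

definition psi :: "real \<Rightarrow> real" where
  "psi u = ln ((1 - u) / (- ln u)) - 1 - (1/2) * ((1 + u) * ln u / (1 - u))"

(* The minimiser of s |-> pow_lin_gap u s, where the derivative u powr s * ln u + (1 - u) vanishes. *)
definition gap_argmin :: "real \<Rightarrow> real" where
  "gap_argmin u = ln ((1 - u) / (- ln u)) / ln u"

lemma gap_argmin_bounds:
  assumes "0 < u" "u < 1"
  shows "0 < gap_argmin u" "gap_argmin u < 1"
proof -
  define c where "c = (1 - u) / (- ln u)"
  have l: "ln u < 0" "u = exp (ln u)" using assms by auto
  have "1 + ln u < exp (ln u)" "1 - ln u < exp (- ln u)"
    using exp_minus_greater[of "- ln u"] exp_minus_greater[of "ln u"] l(1) by auto
  hence "1 + ln u < u" "u * (1 - ln u) < 1"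
    using assms by (simp_all add: exp_minus field_simps)
  hence "u < c" "c < 1"
    using l by (auto simp: c_def field_simps)
  hence "ln u < ln c" "ln c < 0" using assms by auto
  moreover have "gap_argmin u = ln c / ln u" by (simp add: gap_argmin_def c_def)
  ultimately show "0 < gap_argmin u" "gap_argmin u < 1"
    using l(1) by (simp_all add: divide_neg_neg divide_less_eq)
qed

lemma powr_gap_argmin:
  assumes "0 < u" "u < 1"
  shows "u powr gap_argmin u = (1 - u) / (- ln u)"
proof -
  have "(1 - u) / ln u < 0" using assms by (simp add: divide_pos_neg)
  thus ?thesis using assms by (simp add: powr_def gap_argmin_def)
qed

lemma pow_lin_gap_argmin_le:
  assumes u: "0 < u" "u < 1"
  shows "pow_lin_gap u (gap_argmin u) \<le> pow_lin_gap u s"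
proof -
  define \<sigma> where "\<sigma> = gap_argmin u"
  define c where "c = (1 - u) / (- ln u)"
  have c: "u powr \<sigma> = c" "0 < c" "c * ln u = - (1 - u)"
    using powr_gap_argmin[OF u] u by (auto simp: \<sigma>_def c_def divide_pos_neg)
  have "u powr s = u powr \<sigma> * exp ((s - \<sigma>) * ln u)"
    using u by (simp add: powr_def algebra_simps flip: exp_add)
  moreover have "c * (1 + (s - \<sigma>) * ln u) \<le> c * exp ((s - \<sigma>) * ln u)"
    using c by (intro mult_left_mono) auto
  moreover have "c * (1 + (s - \<sigma>) * ln u) = c + (s - \<sigma>) * (c * ln u)"
    by (simp add: algebra_simps)
  ultimately have "c - (1 - u) * (s - \<sigma>) \<le> u powr s"
    using c by (simp add: algebra_simps)
  thus ?thesis using c by (simp add: pow_lin_gap_def \<sigma>_def[symmetric] algebra_simps)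
qed

lemma psi_eq_gap_argmin:
  assumes u: "0 < u" "u < 1"
  shows "psi u = pow_lin_gap u (gap_argmin u) * ln u / (1 - u)"
proof -
  define c where "c = (1 - u) / (- ln u)"
  have "ln u < 0" using u by simp
  hence c: "u powr gap_argmin u = c" "gap_argmin u * ln u = ln c" "c * ln u / (1 - u) = - 1"
    using powr_gap_argmin[OF u] u by (simp_all add: c_def gap_argmin_def field_simps)
  define D where "D = 1 - u"
  have "D \<noteq> 0" using u by (simp add: D_def)
  hence "(c + gap_argmin u * D - (1 + u) / 2) * ln u / D
      = c * ln u / D + gap_argmin u * ln u - (1/2) * ((1 + u) * ln u / D)"
    by (simp add: field_simps)
  moreover have "pow_lin_gap u (gap_argmin u) = c + gap_argmin u * D - (1 + u) / 2"
    using c(1) by (simp add: pow_lin_gap_def D_def algebra_simps)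
  ultimately have "pow_lin_gap u (gap_argmin u) * ln u / (1 - u)
      = c * ln u / (1 - u) + gap_argmin u * ln u - (1/2) * ((1 + u) * ln u / (1 - u))"
    by (simp add: D_def)
  thus ?thesis using c by (simp add: psi_def c_def)
qed

lemma pow_lin_gap_nonneg_if_psi_nonpos:
  assumes u: "0 < u" "u < 1" and "psi u \<le> 0"
  shows "0 \<le> pow_lin_gap u s"
proof -
  have "0 \<le> pow_lin_gap u (gap_argmin u)"
    using assms psi_eq_gap_argmin[OF u] by (auto simp: divide_le_0_iff mult_le_0_iff)
  thus ?thesis using pow_lin_gap_argmin_le[OF u] by (rule order.trans)
qed

lemma psi_eq_0_unique:
  assumes u: "0 < u" "u < 1" "psi u = 0" and v: "0 < v" "v < 1" "psi v = 0"
  shows "u = v"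
proof (rule ccontr)
  assume "u \<noteq> v"
  have False if "0 < a" "a < b" "b < 1" "psi a = 0" "psi b = 0" for a b
  proof -
    define \<sigma> where "\<sigma> = gap_argmin b"
    have "0 < \<sigma>" "\<sigma> < 1" using gap_argmin_bounds[of b] that by (auto simp: \<sigma>_def)
    moreover have "0 \<le> pow_lin_gap a \<sigma>" using pow_lin_gap_nonneg_if_psi_nonpos that by simp
    ultimately have "0 < pow_lin_gap b \<sigma>" using pow_lin_gap_pos that by blast
    moreover have "pow_lin_gap b \<sigma> = 0"
      using psi_eq_gap_argmin[of b] that by (simp add: \<sigma>_def)
    ultimately show False by simp
  qed
  thus False using u v \<open>u \<noteq> v\<close> by (metis linorder_neq_iff)
qed

lemma taylor_exp_le_exp:
  fixes x :: real
  assumes "0 \<le> x \<or> even n"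
  shows "(\<Sum>m<n. x ^ m / fact m) \<le> exp x"
proof -
  obtain t where "exp x = (\<Sum>m<n. x ^ m / fact m) + exp t / fact n * x ^ n"
    using Maclaurin_exp_le by blast
  moreover have "0 \<le> exp t / fact n * x ^ n"
    using assms by (auto simp: zero_le_even_power)
  ultimately show ?thesis by linarith
qed

lemma exp_le_inverse_taylor_exp:
  fixes x :: real
  assumes "even n" "0 < (\<Sum>m<n. (- x) ^ m / fact m)"
  shows "exp x \<le> 1 / (\<Sum>m<n. (- x) ^ m / fact m)"
  using taylor_exp_le_exp[of "- x" n] assms by (simp add: exp_minus divide_simps mult.commute)

lemma ln_197_bounds: "5283 / 1000 \<le> ln (197 :: real)" "ln (197 :: real) \<le> 52834 / 10000"
proof -
  define T where "T = (\<Sum>m<16. (- (132075 / 100000 :: real)) ^ m / fact m)"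
  have T: "0 < T" "(1 / T) ^ 4 \<le> 197"
    by (simp_all add: T_def eval_nat_numeral fact_numeral lessThan_Suc)
  have "exp (5283 / 1000 :: real) = exp (132075 / 100000) ^ 4"
    by (simp flip: exp_of_nat_mult)
  also have "\<dots> \<le> (1 / T) ^ 4"
    using exp_le_inverse_taylor_exp[of 16 "132075 / 100000"] T(1)
    by (intro power_mono) (auto simp: T_def)
  finally have "exp (5283 / 1000) \<le> exp (ln (197 :: real))" using T(2) by simp
  thus "5283 / 1000 \<le> ln (197 :: real)" by (simp only: exp_le_cancel_iff)
next
  define T where "T = (\<Sum>m<14. (132085 / 100000 :: real) ^ m / fact m)"
  have T: "0 \<le> T" "197 \<le> T ^ 4"
    by (simp_all add: T_def eval_nat_numeral fact_numeral lessThan_Suc)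
  have "T ^ 4 \<le> exp (132085 / 100000) ^ 4"
    using taylor_exp_le_exp[of "132085 / 100000" 14] T(1) by (intro power_mono) (auto simp: T_def)
  also have "\<dots> = exp (52834 / 10000 :: real)" by (simp flip: exp_of_nat_mult)
  finally have "exp (ln (197 :: real)) \<le> exp (52834 / 10000)" using T(2) by simp
  thus "ln (197 :: real) \<le> 52834 / 10000" by (simp only: exp_le_cancel_iff)
qed

(* psi (1/197) is about -0.001, so ln 197 and ln (ln 197) are needed to four decimals. *)
lemma psi_1_197_neg: "psi (1 / 197) < 0"
proof -
  define L where "L = ln (197 :: real)"
  have L: "5283 / 1000 \<le> L" "L \<le> 52834 / 10000" using ln_197_bounds by (simp_all add: L_def)
  define T where "T = (\<Sum>m<16. (- (16644 / 10000 :: real)) ^ m / fact m)"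
  have T: "0 < T" "1 / T \<le> 5283 / 1000"
    by (simp_all add: T_def eval_nat_numeral fact_numeral lessThan_Suc)
  have "exp (16644 / 10000) \<le> exp (ln L)"
    using exp_le_inverse_taylor_exp[of 16 "16644 / 10000"] T L by (simp add: T_def)
  hence "16644 / 10000 \<le> ln L" by (simp only: exp_le_cancel_iff)
  moreover have "ln (196 / 197 :: real) \<le> 196 / 197 - 1" by (rule ln_le_minus_one) simp
  moreover have
    "psi (1 / 197) = ln ((196 / 197) / L) - 1 - (1/2) * ((198 / 197) * (- L) / (196 / 197))"
    by (simp add: psi_def ln_div L_def)
  hence "psi (1 / 197) = ln (196 / 197) - ln L - 1 + (99 / 196) * L"
    using L ln_divide_pos[of "196 / 197" L] by simp
  ultimately show ?thesis using L by linarith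
qed

lemma psi_1_256_pos: "0 < psi (1 / 256)"
proof (rule ccontr)
  have "(1 / 4 :: real) powr 4 = 1 / 256" by (subst powr_numeral) (auto simp: eval_nat_numeral)
  hence "(1 / 256 :: real) powr (1 / 4) = ((1 / 4) powr 4) powr (1 / 4)" by (simp only:)
  also have "\<dots> = 1 / 4" by (simp only: powr_powr) simp
  finally have "pow_lin_gap (1 / 256) (1 / 4) < 0" by (simp add: pow_lin_gap_def)
  moreover assume "\<not> 0 < psi (1 / 256)"
  ultimately show False using pow_lin_gap_nonneg_if_psi_nonpos[of "1 / 256" "1 / 4"] by simp
qed

lemma psi_eq_0_ex1: "\<exists>!u. 0 < u \<and> u < 1 \<and> psi u = 0"
proof -
  have "continuous_on {1 / 256 .. 1 / 197} psi"
    unfolding psi_def by (intro continuous_intros) auto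
  then obtain u where "1 / 256 \<le> u" "u \<le> 1 / 197" "psi u = 0"
    using IVT2'[of psi "1 / 197" 0 "1 / 256"] psi_1_197_neg psi_1_256_pos by force
  thus ?thesis using psi_eq_0_unique by (intro ex1I[of _ u]) auto
qed

lemma u_star_root: "0 < u_star" "u_star < 1" "psi u_star = 0"
proof -
  have "u_star = (THE u. 0 < u \<and> u < 1 \<and> psi u = 0)" by (simp add: u_star_def psi_def)
  thus "0 < u_star" "u_star < 1" "psi u_star = 0" using theI'[OF psi_eq_0_ex1] by auto
qed

section \<open>Log-concave functions and sequences\<close>

lemma log_concave_Min:
  assumes F: "finite F" "F \<noteq> {}" and lc: "\<And>f. f \<in> F \<Longrightarrow> log_concave f"
  shows "log_concave (\<lambda>x. Min ((\<lambda>f. f x) ` F))"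
  unfolding log_concave_def
proof (intro conjI allI impI)
  have nonneg: "0 \<le> f x" if "f \<in> F" for f x using lc[OF that] by (simp add: log_concave_def)
  thus "0 \<le> Min ((\<lambda>f. f x) ` F)" for x using F by simp
  fix x y t :: real
  assume t: "0 < t \<and> t < 1"
  show "Min ((\<lambda>f. f x) ` F) powr (1 - t) * Min ((\<lambda>f. f y) ` F) powr t
      \<le> Min ((\<lambda>f. f ((1 - t) * x + t * y)) ` F)"
  proof (rule Min.boundedI)
    fix w assume "w \<in> (\<lambda>f. f ((1 - t) * x + t * y)) ` F"
    then obtain f where f: "f \<in> F" "w = f ((1 - t) * x + t * y)" by blast
    have "Min ((\<lambda>f. f x) ` F) powr (1 - t) * Min ((\<lambda>f. f y) ` F) powr t
        \<le> f x powr (1 - t) * f y powr t"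
      using F f nonneg t by (intro mult_mono powr_mono2) auto
    also have "\<dots> \<le> w" using lc[OF f(1)] t f(2) by (simp add: log_concave_def)
    finally show "Min ((\<lambda>f. f x) ` F) powr (1 - t) * Min ((\<lambda>f. f y) ` F) powr t \<le> w" .
  qed (use F in auto)
qed

lemma log_concave_mult_powr_affine:
  assumes "0 < c" "0 < r"
  shows "log_concave (\<lambda>x. c * r powr (a * x + b))"
proof -
  define L where "L x = ln c + (a * x + b) * ln r" for x
  have e: "c * r powr (a * x + b) = exp (L x)" for x
    using assms by (simp add: L_def powr_def exp_add)
  have "exp (L x) powr (1 - t) * exp (L y) powr t = exp (L ((1 - t) * x + t * y))" for x y t
    unfolding exp_powr_real exp_add[symmetric] by (simp add: L_def algebra_simps)
  thus ?thesis unfolding log_concave_def e by simp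
qed

lemma log_concave_powr_le:
  assumes G: "log_concave G" and a: "0 \<le> a" "a \<le> G x" and b: "0 \<le> b" "b \<le> G y"
    and t: "0 \<le> t" "t \<le> 1"
  shows "a powr (1 - t) * b powr t \<le> G ((1 - t) * x + t * y)"
proof -
  consider "t = 0" | "t = 1" | "0 < t" "t < 1" using t by linarith
  thus ?thesis
  proof cases
    case 3
    have "a powr (1 - t) * b powr t \<le> G x powr (1 - t) * G y powr t"
      using a b 3 by (intro mult_mono powr_mono2) auto
    also have "\<dots> \<le> G ((1 - t) * x + t * y)" using G 3 by (simp add: log_concave_def)
    finally show ?thesis .
  qed (use a b t in \<open>auto simp: powr_def mult_le_one\<close>)
qed

lemma lc_majorant_le:
  assumes "log_concave g" "\<And>x. \<phi> x \<le> g x"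
  shows "lc_majorant \<phi> z \<le> g z"
  unfolding lc_majorant_def
  by (rule cInf_lower) (use assms in \<open>auto intro!: bdd_belowI[of _ 0] simp: log_concave_def\<close>)

lemma le_lc_majorant:
  assumes "log_concave g\<^sub>0" "\<And>x. \<phi> x \<le> g\<^sub>0 x"
    and "\<And>g. log_concave g \<Longrightarrow> \<forall>x. \<phi> x \<le> g x \<Longrightarrow> w \<le> g z"
  shows "w \<le> lc_majorant \<phi> z"
  unfolding lc_majorant_def by (rule cInf_greatest) (use assms in auto)

lemma log_concave_seq_ratio_antimono:
  fixes f :: "int \<Rightarrow> real"
  assumes nonneg: "\<And>m. 0 \<le> f m" and lc: "\<And>m. f m * f (m + 2) \<le> f (m + 1) ^ 2"
    and zero: "\<And>m. f m = 0 \<Longrightarrow> f (m + 1) = 0" and "a \<le> b"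
  shows "f a * f (b + 1) \<le> f (a + 1) * f b"
  using \<open>a \<le> b\<close>
proof (induction b rule: int_ge_induct)
  case base
  show ?case by (simp add: mult.commute)
next
  case (step b)
  show ?case
  proof (cases "f b = 0")
    case True
    thus ?thesis using zero[of b] zero[of "b + 1"] nonneg by simp
  next
    case False
    hence pos: "0 < f b" using nonneg[of b] by simp
    have "f b * (f a * f (b + 1 + 1)) = f a * (f b * f (b + 2))" by (simp add: ac_simps)
    also have "\<dots> \<le> f a * f (b + 1) ^ 2" using lc nonneg by (intro mult_left_mono) auto
    also have "\<dots> = f (b + 1) * (f a * f (b + 1))" by (simp add: power2_eq_square ac_simps)
    also have "\<dots> \<le> f (b + 1) * (f (a + 1) * f b)"
      using step.IH nonneg by (intro mult_left_mono) auto
    also have "\<dots> = f b * (f (a + 1) * f (b + 1))" by (simp add: ac_simps)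
    finally show ?thesis using pos by (simp only: mult_le_cancel_left_pos)
  qed
qed

lemma ratio_antimono_le_chord:
  fixes f :: "int \<Rightarrow> real"
  assumes ratio: "\<And>a b. a \<le> b \<Longrightarrow> f a * f (b + 1) \<le> f (a + 1) * f b"
    and pos: "0 < f j" "0 < f (j + 1)"
  shows "f m \<le> f j * (f (j + 1) / f j) powr (m - j)"
proof -
  define r where "r = f (j + 1) / f j"
  have r: "0 < r" using pos by (simp add: r_def)
  show ?thesis
  proof (cases "j \<le> m")
    case True
    thus ?thesis unfolding r_def[symmetric]
    proof (induction m rule: int_ge_induct)
      case base
      show ?case using r by simp
    next
      case (step m)
      have "f (m + 1) \<le> r * f m" using ratio[OF step.hyps] pos by (simp add: r_def field_simps)
      also have "\<dots> \<le> r * (f j * r powr (m - j))" using step.IH r by (intro mult_left_mono) auto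
      also have "\<dots> = f j * r powr (real_of_int (m - j) + 1)" using r by (simp add: powr_add)
      also have "real_of_int (m - j) + 1 = m + 1 - j" by simp
      finally show ?case .
    qed
  next
    case False
    hence "m \<le> j" by simp
    thus ?thesis unfolding r_def[symmetric]
    proof (induction m rule: int_le_induct)
      case base
      show ?case using r by simp
    next
      case (step m)
      have "r * f (m - 1) \<le> f m"
        using ratio[of "m - 1" j] step.hyps pos by (simp add: r_def field_simps)
      hence "f (m - 1) \<le> f m / r" using r by (simp add: field_simps)
      also have "\<dots> \<le> f j * r powr (m - j) / r" using step.IH r by (intro divide_right_mono) auto
      also have "\<dots> = f j * r powr (m - 1 - j)" using r by (simp add: powr_diff)
      finally show ?case .
    qed
  qed
qed

section \<open>Binomial tails\<close>

lemma Suc_mult_choose_Suc: "Suc k * (n choose Suc k) = (n - k) * (n choose k)"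
  using binomial_absorption[of k n] binomial_absorb_comp[of n k] by (simp only:)

lemma choose_ratio_antimono:
  assumes "a \<le> b"
  shows "(n choose a) * (n choose Suc b) \<le> (n choose Suc a) * (n choose b)"
proof -
  have "Suc a * Suc b * ((n choose a) * (n choose Suc b))
      = (n choose a) * (n choose b) * (Suc a * (n - b))"
    using Suc_mult_choose_Suc[of b n] by (simp only: ac_simps)
  also have "\<dots> \<le> (n choose a) * (n choose b) * (Suc b * (n - a))"
    using assms by (intro mult_le_mono2 mult_le_mono) auto
  also have "\<dots> = Suc b * (n choose b) * (Suc a * (n choose Suc a))"
    by (simp only: Suc_mult_choose_Suc ac_simps)
  also have "\<dots> = Suc a * Suc b * ((n choose Suc a) * (n choose b))"
    by (simp only: ac_simps)
  finally show ?thesis by (subst (asm) mult_le_cancel1) simp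
qed

definition choose_int :: "nat \<Rightarrow> int \<Rightarrow> real" where
  "choose_int n k = (if k < 0 then 0 else real (n choose nat k))"

lemma choose_int_ratio_antimono:
  assumes "a \<le> b"
  shows "choose_int n a * choose_int n (b + 1) \<le> choose_int n (a + 1) * choose_int n b"
proof (cases "a < 0")
  case False
  hence "nat (a + 1) = Suc (nat a)" "nat (b + 1) = Suc (nat b)" "\<not> b < 0" using assms by auto
  thus ?thesis
    using choose_ratio_antimono[of "nat a" "nat b" n] assms False
    by (simp add: choose_int_def flip: of_nat_mult)
qed (simp add: choose_int_def)

definition binom_tail :: "nat \<Rightarrow> int \<Rightarrow> real" where
  "binom_tail n m = (\<Sum>k | k \<le> n \<and> m \<le> int k. real (n choose k))"

lemma binom_tail_step: "binom_tail n m = choose_int n m + binom_tail n (m + 1)"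
proof (cases "0 \<le> m \<and> m \<le> int n")
  case True
  hence "{k. k \<le> n \<and> m \<le> int k} = insert (nat m) {k. k \<le> n \<and> m + 1 \<le> int k}" by auto
  thus ?thesis using True by (simp add: binom_tail_def choose_int_def)
next
  case False
  hence "{k. k \<le> n \<and> m \<le> int k} = {k. k \<le> n \<and> m + 1 \<le> int k}" "choose_int n m = 0"
    by (auto simp: choose_int_def)
  thus ?thesis by (simp add: binom_tail_def)
qed

lemma binom_tail_nonneg: "0 \<le> binom_tail n m"
  by (simp add: binom_tail_def sum_nonneg)

lemma binom_tail_eq_0: "int n < m \<Longrightarrow> binom_tail n m = 0"
  by (auto simp: binom_tail_def intro!: sum.neutral)

lemma binom_tail_pos: "m \<le> int n \<Longrightarrow> 0 < binom_tail n m"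
  unfolding binom_tail_def by (rule sum_pos2[of _ n]) auto

lemma binom_tail_eq_2_power: "m \<le> 0 \<Longrightarrow> binom_tail n m = 2 ^ n"
proof -
  assume "m \<le> 0"
  hence "{k. k \<le> n \<and> m \<le> int k} = {..n}" by auto
  moreover have "(\<Sum>k\<le>n. real (n choose k)) = 2 ^ n"
    using choose_row_sum[of n] by (metis of_nat_numeral of_nat_power of_nat_sum)
  ultimately show ?thesis by (simp add: binom_tail_def)
qed

lemma choose_int_mult_binom_tail_le:
  assumes "m + 1 \<le> k"
  shows "choose_int n m * binom_tail n (k + 1) \<le> choose_int n (m + 1) * binom_tail n k"
proof (cases "k \<le> int n + 1")
  case True
  have "m + 1 \<le> k \<longrightarrow>
      choose_int n m * binom_tail n (k + 1) \<le> choose_int n (m + 1) * binom_tail n k"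
    using True
  proof (induction k rule: int_le_induct)
    case base
    show ?case by (simp add: binom_tail_eq_0 binom_tail_nonneg choose_int_def)
  next
    case (step i)
    show ?case
    proof
      assume m: "m + 1 \<le> i - 1"
      have "choose_int n m * binom_tail n (i - 1 + 1)
          = choose_int n m * choose_int n i + choose_int n m * binom_tail n (i + 1)"
        using binom_tail_step[of n i] by (simp add: distrib_left)
      also have "\<dots> \<le> choose_int n (m + 1) * choose_int n (i - 1)
          + choose_int n (m + 1) * binom_tail n i"
        using choose_int_ratio_antimono[of m "i - 1" n] step.IH m by (intro add_mono) auto
      also have "\<dots> = choose_int n (m + 1) * binom_tail n (i - 1)"
        using binom_tail_step[of n "i - 1"] by (simp add: distrib_left)
      finally show "choose_int n m * binom_tail n (i - 1 + 1)
          \<le> choose_int n (m + 1) * binom_tail n (i - 1)" .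
    qed
  qed
  thus ?thesis using assms by simp
qed (simp add: binom_tail_eq_0 binom_tail_nonneg choose_int_def)

lemma binom_tail_log_concave: "binom_tail n m * binom_tail n (m + 2) \<le> binom_tail n (m + 1) ^ 2"
proof -
  have "binom_tail n m * binom_tail n (m + 2)
      = choose_int n m * binom_tail n (m + 1 + 1) + binom_tail n (m + 1) * binom_tail n (m + 2)"
    using binom_tail_step[of n m] by (simp add: algebra_simps)
  also have "\<dots> \<le> choose_int n (m + 1) * binom_tail n (m + 1)
      + binom_tail n (m + 1) * binom_tail n (m + 2)"
    using choose_int_mult_binom_tail_le[of m "m + 1" n] by simp
  also have "\<dots> = binom_tail n (m + 1) ^ 2"
    using binom_tail_step[of n "m + 1"] by (simp add: algebra_simps power2_eq_square)
  finally show ?thesis .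
qed

lemma binom_tail_ratio_ge:
  assumes "0 \<le> j" "j < int n"
  shows "(int n - j) * binom_tail n j \<le> (n + 1) * binom_tail n (j + 1)"
proof -
  have "real (Suc (nat j) * (n choose Suc (nat j))) = real ((n - nat j) * (n choose nat j))"
    by (simp only: Suc_mult_choose_Suc)
  hence p: "(int n - j) * choose_int n j = (j + 1) * choose_int n (j + 1)"
    using assms by (simp add: choose_int_def nat_add_distrib of_nat_diff algebra_simps)
  have "choose_int n (j + 1) \<le> binom_tail n (j + 1)"
    using binom_tail_step[of n "j + 1"] by (simp add: binom_tail_nonneg)
  hence "(int n - j) * binom_tail n j
      \<le> (j + 1) * binom_tail n (j + 1) + (int n - j) * binom_tail n (j + 1)"
    using assms binom_tail_step[of n j] p by (simp add: distrib_left)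
  thus ?thesis by (simp add: algebra_simps)
qed

section \<open>Tails of Rademacher sums\<close>

lemma sum_plus_minus_one:
  "(\<Sum>i<n. (if h i then 1 else -1 :: int)) = 2 * int (card {i\<in>{..<n}. h i}) - int n"
proof (induction n)
  case (Suc n)
  have "{i\<in>{..<Suc n}. h i} = (if h n then insert n {i\<in>{..<n}. h i} else {i\<in>{..<n}. h i})"
    by (auto simp: less_Suc_eq)
  thus ?case using Suc by auto
qed simp

lemma rademacher_sum_eq_binomial:
  "rademacher_sum n = map_pmf (\<lambda>k. 2 * int k - int n) (binomial_pmf n (1/2))"
proof -
  define f :: "bool \<Rightarrow> int" where "f = (\<lambda>b. if b then 1 else -1)"
  define A where "A = {..<n}"
  define B where "B = bernoulli_pmf (1/2)"
  define H where "H = Pi_pmf A True (\<lambda>_. B)"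
  have "map_pmf f B = map_pmf f (pmf_of_set UNIV)"
    by (simp add: B_def bernoulli_pmf_half_conv_pmf_of_set)
  also have "\<dots> = pmf_of_set (f ` UNIV)"
    by (rule map_pmf_of_set_inj) (auto simp: f_def inj_on_def)
  also have "f ` UNIV = {-1, 1}" by (auto simp: f_def image_iff UNIV_bool)
  finally have sign: "pmf_of_set {-1, 1::int} = map_pmf f B" by simp
  have "Pi_pmf A 0 (\<lambda>_. pmf_of_set {-1, 1::int})
      = map_pmf (\<lambda>g x. if x \<in> A then g x else 0) (Pi_pmf A 1 (\<lambda>_. map_pmf f B))"
    unfolding sign by (rule Pi_pmf_default_swap[symmetric]) (simp add: A_def)
  also have "Pi_pmf A 1 (\<lambda>_. map_pmf f B) = map_pmf (\<lambda>h. f \<circ> h) H"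
    unfolding H_def by (rule Pi_pmf_map) (auto simp: A_def f_def)
  finally have "rademacher_sum n = map_pmf (\<lambda>h. \<Sum>i<n. f (h i)) H"
    by (simp add: rademacher_sum_def A_def map_pmf_comp)
  also have "\<dots> = map_pmf (\<lambda>h. 2 * int (card {i\<in>A. h i}) - int n) H"
    using sum_plus_minus_one by (simp add: f_def A_def)
  also have "\<dots> = map_pmf (\<lambda>k. 2 * int k - int n) (map_pmf (\<lambda>h. card {i\<in>A. h i}) H)"
    by (simp add: map_pmf_comp)
  also have "map_pmf (\<lambda>h. card {i\<in>A. h i}) H = binomial_pmf n (1/2)"
    unfolding H_def B_def by (rule binomial_pmf_altdef'[symmetric]) (auto simp: A_def)
  finally show ?thesis .
qed

lemma pmf_binomial_half:
  assumes "k \<le> n"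
  shows "pmf (binomial_pmf n (1/2)) k = real (n choose k) / 2 ^ n"
proof -
  have "(1/2 :: real) ^ k * (1/2) ^ (n - k) = (1/2) ^ n" using assms by (simp flip: power_add)
  thus ?thesis by (simp add: pmf_binomial power_one_over mult.assoc)
qed

lemma tailR_eq_binom_tail: "tailR n z = binom_tail n \<lceil>(z + real n) / 2\<rceil> / 2 ^ n"
proof -
  define K where "K = {k. k \<le> n \<and> \<lceil>(z + real n) / 2\<rceil> \<le> int k}"
  have "(\<lambda>k. 2 * int k - int n) -` {r. z \<le> real_of_int r} \<inter> set_pmf (binomial_pmf n (1/2)) = K"
    by (auto simp: K_def set_pmf_binomial ceiling_le_iff field_simps)
  hence "tailR n z = measure_pmf.prob (binomial_pmf n (1/2)) K"
    unfolding tailR_def rademacher_sum_eq_binomial measure_map_pmf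
    by (metis measure_Int_set_pmf)
  also have "\<dots> = (\<Sum>k\<in>K. pmf (binomial_pmf n (1/2)) k)"
    by (rule measure_measure_pmf_finite) (simp add: K_def)
  also have "\<dots> = (\<Sum>k\<in>K. real (n choose k) / 2 ^ n)"
    by (rule sum.cong[OF refl], rule pmf_binomial_half) (simp add: K_def)
  also have "\<dots> = binom_tail n \<lceil>(z + real n) / 2\<rceil> / 2 ^ n"
    by (simp add: binom_tail_def K_def sum_divide_distrib)
  finally show ?thesis .
qed

definition lattice_tail :: "nat \<Rightarrow> int \<Rightarrow> real" where
  "lattice_tail n m = binom_tail n m / 2 ^ n"

lemma tailR_lattice: "tailR n (real_of_int (2 * m - int n)) = lattice_tail n m"
  by (simp add: tailR_eq_binom_tail lattice_tail_def)

lemma tailR_eq_1: "z \<le> - real n \<Longrightarrow> tailR n z = 1"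
  by (simp add: tailR_eq_binom_tail binom_tail_eq_2_power ceiling_le_iff)

lemma tailR_le_1: "tailR n z \<le> 1"
  by (simp add: tailR_def)

lemma lattice_tail_pos: "m \<le> int n \<Longrightarrow> 0 < lattice_tail n m"
  by (simp add: lattice_tail_def binom_tail_pos)

lemma lattice_tail_mono: "lattice_tail n (m + 1) \<le> lattice_tail n m"
  using binom_tail_step[of n m] by (simp add: lattice_tail_def divide_right_mono choose_int_def)

lemma lattice_tail_ratio_antimono:
  "a \<le> b \<Longrightarrow>
    lattice_tail n a * lattice_tail n (b + 1) \<le> lattice_tail n (a + 1) * lattice_tail n b"
proof (rule log_concave_seq_ratio_antimono)
  show "0 \<le> lattice_tail n m" for m by (simp add: lattice_tail_def binom_tail_nonneg)
  show "lattice_tail n m * lattice_tail n (m + 2) \<le> lattice_tail n (m + 1) ^ 2" for m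
    using binom_tail_log_concave[of n m]
    by (simp add: lattice_tail_def power2_eq_square divide_right_mono)
  show "lattice_tail n (m + 1) = 0" if "lattice_tail n m = 0" for m
  proof -
    have "int n < m" using that lattice_tail_pos[of m n] by linarith
    thus ?thesis by (simp add: lattice_tail_def binom_tail_eq_0)
  qed
qed

lemma lattice_tail_le_chord:
  assumes "j + 1 \<le> int n"
  shows "lattice_tail n m
    \<le> lattice_tail n j * (lattice_tail n (j + 1) / lattice_tail n j) powr (m - j)"
  by (rule ratio_antimono_le_chord[where f = "lattice_tail n"])
    (use assms in \<open>auto intro: lattice_tail_ratio_antimono lattice_tail_pos\<close>)

lemma lattice_tail_ratio_ge:
  assumes "0 \<le> j" "j < int n"
  shows "(int n - j) / (real n + 1) * lattice_tail n j \<le> lattice_tail n (j + 1)"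
proof -
  have "(int n - j) / (real n + 1) * lattice_tail n j
      = (int n - j) * binom_tail n j / ((real n + 1) * 2 ^ n)"
    by (simp add: lattice_tail_def algebra_simps)
  also have "\<dots> \<le> (real n + 1) * binom_tail n (j + 1) / ((real n + 1) * 2 ^ n)"
    using binom_tail_ratio_ge[OF assms] by (rule divide_right_mono) simp
  also have "\<dots> = lattice_tail n (j + 1)" by (simp add: lattice_tail_def)
  finally show ?thesis .
qed

lemma tailR_lin_as_interpolation:
  obtains M \<gamma> where "0 \<le> \<gamma>" "\<gamma> < 1" "v = 2 * M - real n + 2 * \<gamma>"
    "tailR_lin n v = (1 - \<gamma>) * lattice_tail n M + \<gamma> * lattice_tail n (M + 1)"
proof -
  define k where "k = \<lfloor>(v - real n) / 2\<rfloor>"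
  define \<gamma> where "\<gamma> = (v - real n - 2 * real_of_int k) / 2"
  have "real_of_int k \<le> (v - real n) / 2" "(v - real n) / 2 < real_of_int k + 1"
    unfolding k_def by linarith+
  hence "0 \<le> \<gamma>" "\<gamma> < 1" by (simp_all add: \<gamma>_def)
  moreover have "v = 2 * real_of_int (int n + k) - real n + 2 * \<gamma>" by (simp add: \<gamma>_def field_simps)
  moreover have "tailR n (real n + 2 * real_of_int k) = lattice_tail n (int n + k)"
    "tailR n (real n + 2 * real_of_int k + 2) = lattice_tail n (int n + k + 1)"
    using tailR_lattice[of n "int n + k"] tailR_lattice[of n "int n + k + 1"]
    by (simp_all add: add.assoc)
  hence "tailR_lin n v
      = (1 - \<gamma>) * lattice_tail n (int n + k) + \<gamma> * lattice_tail n (int n + k + 1)"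
    unfolding tailR_lin_def Let_def k_def[symmetric] \<gamma>_def[symmetric] by (simp only:)
  ultimately show ?thesis by (rule that)
qed

lemma tailR_lin_le_1: "tailR_lin n v \<le> 1"
proof -
  have Q: "lattice_tail n m \<le> 1" for m using tailR_le_1 by (simp flip: tailR_lattice)
  obtain M \<gamma> where \<gamma>: "0 \<le> \<gamma>" "\<gamma> < 1"
    and lin: "tailR_lin n v = (1 - \<gamma>) * lattice_tail n M + \<gamma> * lattice_tail n (M + 1)"
    by (rule tailR_lin_as_interpolation)
  have "tailR_lin n v \<le> (1 - \<gamma>) * 1 + \<gamma> * 1"
    unfolding lin using \<gamma> Q by (intro add_mono mult_left_mono) auto
  thus ?thesis by simp
qed

section \<open>Comparison of the two majorants\<close>

definition log_chord :: "nat \<Rightarrow> int \<Rightarrow> real \<Rightarrow> real" where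
  "log_chord n j z = lattice_tail n j
     * (lattice_tail n (j + 1) / lattice_tail n j) powr ((z - real_of_int (2 * j - int n)) / 2)"

lemma log_chord_le_log_concave_majorant:
  assumes G: "log_concave G" "\<And>x. tailR n x \<le> G x" and j: "j + 1 \<le> int n"
    and z: "real_of_int (2 * j - int n) \<le> z" "z \<le> real_of_int (2 * j - int n) + 2"
  shows "log_chord n j z \<le> G z"
proof -
  define x where "x = real_of_int (2 * j - int n)"
  define s where "s = (z - x) / 2"
  have Q: "0 < lattice_tail n j" "0 < lattice_tail n (j + 1)" using j lattice_tail_pos by auto
  have "log_chord n j z = lattice_tail n j powr (1 - s) * lattice_tail n (j + 1) powr s"
    using Q by (simp add: log_chord_def s_def x_def powr_divide powr_diff)
  also have "\<dots> \<le> G ((1 - s) * x + s * (x + 2))"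
  proof (rule log_concave_powr_le[OF G(1)])
    show "lattice_tail n j \<le> G x" using G(2)[of x] by (simp only: x_def tailR_lattice)
    have "x + 2 = real_of_int (2 * (j + 1) - int n)" by (simp add: x_def)
    thus "lattice_tail n (j + 1) \<le> G (x + 2)" using G(2)[of "x + 2"] by (simp only: tailR_lattice)
  qed (use Q z in \<open>auto simp: s_def x_def\<close>)
  also have "(1 - s) * x + s * (x + 2) = z" by (simp add: s_def field_simps)
  finally show ?thesis .
qed

lemma tailR_lin_le_log_chord:
  assumes j: "j + 1 \<le> int n" and u: "0 < u" "u * lattice_tail n j \<le> lattice_tail n (j + 1)"
    and gap: "\<forall>s\<in>{0..1/2}. 0 \<le> pow_lin_gap u s"
  shows "tailR_lin n v \<le> log_chord n j (v - 1)"
proof -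
  define r where "r = lattice_tail n (j + 1) / lattice_tail n j"
  have Q: "0 < lattice_tail n j" using j lattice_tail_pos by auto
  have r: "0 < r" "u \<le> r" "r \<le> 1"
    using Q u j lattice_tail_pos[of "j + 1" n] lattice_tail_mono[of n j]
    by (auto simp: r_def field_simps)
  obtain M \<gamma> where \<gamma>: "0 \<le> \<gamma>" "\<gamma> < 1" and v: "v = 2 * M - real n + 2 * \<gamma>"
    and lin: "tailR_lin n v = (1 - \<gamma>) * lattice_tail n M + \<gamma> * lattice_tail n (M + 1)"
    by (rule tailR_lin_as_interpolation)
  have chord: "lattice_tail n m \<le> lattice_tail n j * r powr (m - j)" for m
    unfolding r_def by (rule lattice_tail_le_chord[OF j])
  define P where "P = lattice_tail n j * r powr (M - j)"
  have "real_of_int (M + 1 - j) = real_of_int (M - j) + 1" by simp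
  hence "r powr real_of_int (M + 1 - j) = r powr real_of_int (M - j) * r"
    using r by (simp only: powr_add) simp
  hence "lattice_tail n M \<le> P" "lattice_tail n (M + 1) \<le> P * r"
    using chord[of M] chord[of "M + 1"] by (simp_all add: P_def mult.assoc)
  hence "tailR_lin n v \<le> (1 - \<gamma>) * P + \<gamma> * (P * r)"
    unfolding lin using \<gamma> by (intro add_mono mult_left_mono) auto
  also have "\<dots> = P * ((1 - \<gamma>) + \<gamma> * r)" by (simp add: algebra_simps)
  also have "\<dots> \<le> P * r powr (\<gamma> - 1/2)"
    using lin_interp_le_powr[OF u(1) r(2,3) gap, of \<gamma>] \<gamma> Q r
    by (intro mult_left_mono) (auto simp: P_def)
  also have "\<dots> = lattice_tail n j * r powr (real_of_int (M - j) + (\<gamma> - 1/2))"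
    using r by (simp add: P_def powr_add mult.assoc)
  also have "real_of_int (M - j) + (\<gamma> - 1/2) = (v - 1 - real_of_int (2 * j - int n)) / 2"
    by (simp add: v field_simps)
  also have "lattice_tail n j * r powr ((v - 1 - real_of_int (2 * j - int n)) / 2)
      = log_chord n j (v - 1)"
    by (simp only: log_chord_def r_def)
  finally show ?thesis .
qed

lemma log_concave_log_chord:
  assumes "j + 1 \<le> int n"
  shows "log_concave (\<lambda>v. log_chord n j (v - 1))"
proof -
  have "(\<lambda>v. log_chord n j (v - 1)) = (\<lambda>v. lattice_tail n j
      * (lattice_tail n (j + 1) / lattice_tail n j) powr (1/2 * v + (- 1 - (2 * j - real n)) / 2))"
    by (rule ext) (simp add: log_chord_def field_simps)
  moreover have "0 < lattice_tail n j" "0 < lattice_tail n (j + 1)" using assms lattice_tail_pos by auto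
  ultimately show ?thesis by (simp only: log_concave_mult_powr_affine divide_pos_pos)
qed

lemma lc_majorant_tailR_lin_shift_le:
  fixes J :: int
  assumes J: "J \<le> int n" and u: "0 < u" and gap: "\<forall>s\<in>{0..1/2}. 0 \<le> pow_lin_gap u s"
    and ratio: "\<And>j. 0 \<le> j \<Longrightarrow> j < J \<Longrightarrow> u * lattice_tail n j \<le> lattice_tail n (j + 1)"
    and z: "z \<le> 2 * real_of_int J - real n"
  shows "lc_majorant (tailR_lin n) (1 + z) \<le> lc_majorant (tailR n) z"
proof -
  define F where "F = insert (\<lambda>_. 1) ((\<lambda>j v. log_chord n j (v - 1)) ` {0..<J})"
  define g where "g v = Min ((\<lambda>f. f v) ` F)" for v
  have F: "finite F" "F \<noteq> {}" by (auto simp: F_def)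
  have lcg: "log_concave g"
    unfolding g_def using F J
    by (intro log_concave_Min)
      (auto simp: F_def log_concave_def[of "\<lambda>_. 1"] intro: log_concave_log_chord)
  have maj: "tailR_lin n v \<le> g v" for v
    unfolding g_def using F J
    by (intro Min.boundedI)
      (auto simp: F_def tailR_lin_le_1 intro!: tailR_lin_le_log_chord[OF _ u _ gap] ratio)
  have below: "g (1 + z) \<le> G z" if G: "log_concave G" "\<forall>x. tailR n x \<le> G x" for G
  proof (cases "z \<le> - real n")
    case True
    have "g (1 + z) \<le> 1" unfolding g_def using F by (intro Min_le) (auto simp: F_def)
    also have "\<dots> = tailR n z" using True by (simp add: tailR_eq_1)
    finally show ?thesis using G by (meson order.trans)
  next
    case False
    define j where "j = \<lceil>(z + real n) / 2\<rceil> - 1"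
    have "real_of_int j < (z + real n) / 2" "(z + real n) / 2 \<le> real_of_int j + 1"
      unfolding j_def by linarith+
    hence j: "0 \<le> j" "j < J"
      and zj: "real_of_int (2 * j - int n) \<le> z" "z \<le> real_of_int (2 * j - int n) + 2"
      using False z by (auto simp: field_simps)
    have "(\<lambda>v. log_chord n j (v - 1)) \<in> F" using j by (simp add: F_def)
    hence "log_chord n j (1 + z - 1) \<in> (\<lambda>f. f (1 + z)) ` F" by (rule rev_image_eqI) simp
    hence "g (1 + z) \<le> log_chord n j (1 + z - 1)"
      unfolding g_def using F by (meson Min_le finite_imageI)
    also have "\<dots> \<le> G z" using G j J zj by (auto intro: log_chord_le_log_concave_majorant)
    finally show ?thesis .
  qed
  have "lc_majorant (tailR_lin n) (1 + z) \<le> g (1 + z)" using lcg maj by (rule lc_majorant_le)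
  also have "g (1 + z) \<le> lc_majorant (tailR n) z"
    by (rule le_lc_majorant[of "\<lambda>_. 1"])
      (use below tailR_le_1 in \<open>auto simp: log_concave_def\<close>)
  finally show ?thesis .
qed

lemma lc_majorant_tailR_lin_shift_le_psi:
  fixes J :: int
  assumes J: "J \<le> int n" and u: "0 < u" "u < 1" "psi u \<le> 0"
    and uJ: "u * (real n + 1) \<le> real n + 1 - J" and z: "z \<le> 2 * real_of_int J - real n"
  shows "lc_majorant (tailR_lin n) (1 + z) \<le> lc_majorant (tailR n) z"
proof (rule lc_majorant_tailR_lin_shift_le[OF J u(1) _ _ z])
  show "\<forall>s\<in>{0..1/2}. 0 \<le> pow_lin_gap u s" using pow_lin_gap_nonneg_if_psi_nonpos u by blast
  fix j assume j: "0 \<le> j" "j < J"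
  have "u \<le> (int n - j) / (real n + 1)" using uJ j by (simp add: field_simps)
  hence "u * lattice_tail n j \<le> (int n - j) / (real n + 1) * lattice_tail n j"
    by (rule mult_right_mono) (simp add: lattice_tail_def binom_tail_nonneg)
  also have "\<dots> \<le> lattice_tail n (j + 1)" using j J by (intro lattice_tail_ratio_ge) auto
  finally show "u * lattice_tail n j \<le> lattice_tail n (j + 1)" .
qed

lemma j_star2_bounds: "j_star2 n \<le> int n" "u_star * (real n + 1) \<le> real n + 1 - j_star2 n"
proof -
  define w where "w = u_star2"
  have w: "0 \<le> w" "u_star = w / (1 + w)"
    using u_star_root by (auto simp: w_def u_star2_def field_simps)
  have J: "j_star2 n \<le> (real n - w) / (1 + w)" unfolding j_star2_def w_def by linarith
  also have "\<dots> \<le> real n" using w by (simp add: field_simps)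
  finally show "j_star2 n \<le> int n" by simp
  have "(real n - w) / (1 + w) \<le> (real n + 1) / (1 + w)" using w by (intro divide_right_mono) auto
  hence "j_star2 n \<le> (real n + 1) / (1 + w)" using J by linarith
  moreover have "u_star * (real n + 1) = real n + 1 - (real n + 1) / (1 + w)"
    unfolding w(2) using w(1) by (simp add: field_simps)
  ultimately show "u_star * (real n + 1) \<le> real n + 1 - j_star2 n" by linarith
qed

theorem corollary2p8:
  fixes n :: nat and b :: real
  assumes "n \<ge> 1" and "b > 0"
  shows "(\<forall>y::real. y * sqrt n / (2 * b) + real n / 2 \<le> real_of_int (j_star2 n) \<longrightarrow>
            c3 * lc_majorant (tailR_lin n) (1 + y * sqrt n / b)
              \<le> c3 * lc_majorant (tailR n) (y * sqrt n / b))
       \<and> (n \<le> 196 \<longrightarrow>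
           (\<forall>y::real. y * sqrt n / (2 * b) + real n / 2 \<le> real n \<longrightarrow>
            c3 * lc_majorant (tailR_lin n) (1 + y * sqrt n / b)
              \<le> c3 * lc_majorant (tailR n) (y * sqrt n / b)))"
proof -
  have shift: "c3 * lc_majorant (tailR_lin n) (1 + z) \<le> c3 * lc_majorant (tailR n) z"
    if "z / 2 + real n / 2 \<le> J" "J \<le> int n" "0 < u" "u < 1" "psi u \<le> 0"
      "u * (real n + 1) \<le> real n + 1 - J" for z u and J :: int
    using lc_majorant_tailR_lin_shift_le_psi[OF that(2-6)] that(1)
    by (intro mult_left_mono) (auto simp: c3_def)
  have half: "y * sqrt n / (2 * b) = (y * sqrt n / b) / 2" for y by simp
  show ?thesis
  proof (intro conjI allI impI)
    fix y
    show "c3 * lc_majorant (tailR_lin n) (1 + y * sqrt n / b) \<le> c3 * lc_majorant (tailR n) (y * sqrt n / b)"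
      if "y * sqrt n / (2 * b) + real n / 2 \<le> j_star2 n"
      using shift[where z = "y * sqrt n / b" and J = "j_star2 n" and u = u_star]
        that[unfolded half] u_star_root j_star2_bounds
      by simp
    show "c3 * lc_majorant (tailR_lin n) (1 + y * sqrt n / b) \<le> c3 * lc_majorant (tailR n) (y * sqrt n / b)"
      if "n \<le> 196" "y * sqrt n / (2 * b) + real n / 2 \<le> real n"
      using shift[where z = "y * sqrt n / b" and J = "int n" and u = "1 / 197"]
        that[unfolded half] psi_1_197_neg
      by simp
  qed
qed

end
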